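(* Let $\Bbbk$ be a field, $H$ a Hopf $\Bbbk$-algebra with bijective antipode, and $A$ a left $H$-module $\Bbbk$-algebra. Equip $\operatorname{Spec} A$ with the Jacobson-Zariski topology and $H\text{-}\operatorname{Spec} A$ with the topology whose closed sets are $V_H(S)=\{Q\in H\text{-}\operatorname{Spec} A \mid Q\supseteq S\}$, $S\subseteq A$. Let $\kappa_H\colon \operatorname{Spec} A\to H\text{-}\operatorname{Spec} A$, $P\mapsto P\!:\!H$. Then: (a) $\kappa_H$ is continuous. (b) If all $H$-prime ideals of $A$ are prime, then the topology of $H\text{-}\operatorname{Spec} A$ is the initial (subspace) topology for the inclusion map $H\text{-}\operatorname{Spec} A \hookrightarrow \operatorname{Spec} A$. (c) If $\kappa_H$ is surjective and $\bigcap \operatorname{Spec}_I A = I$ for all $I \in H\text{-}\operatorname{Spec} A$, where $\operatorname{Spec}_I A=\kappa_H^{-1}(I)$, then the topology of $H\text{-}\operatorname{Spec} A$ is the final (quotient) topology for $\kappa_H$.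
   Context: A left $H$-module algebra is a $\Bbbk$-algebra $A$ with $1$ that is a left $H$-module via $h\otimes a\mapsto h.a$ such that $h.(ab)=(h_1.a)(h_2.b)$ and $h.1=\varepsilon(h)1$. An $H$-ideal is a two-sided ideal which is an $H$-submodule; an $H$-ideal $I$ is $H$-prime if $A/I\ne0$ and the product of any two nonzero $H$-ideals of $A/I$ is nonzero. $H\text{-}\operatorname{Spec} A$ is the set of $H$-prime ideals of $A$. For an ideal $P$, $P\!:\!H=\{a\in A\mid H.a\subseteq P\}$, the largest $H$-ideal contained in $P$; if $P$ is prime then $P\!:\!H$ is $H$-prime. The Jacobson-Zariski topology on $\operatorname{Spec} A$ has closed sets $V(S)=\{P\in\operatorname{Spec} A\mid P\supseteq S\}$. *)

theory Defs
  imports "HOL-Analysis.Analysis"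
begin

definition k_algebra :: "('k::field \<Rightarrow> 'r::ring_1 \<Rightarrow> 'r) \<Rightarrow> bool" where
  "k_algebra s \<longleftrightarrow> vector_space s \<and>
     (\<forall>c x y. s c (x * y) = s c x * y \<and> s c (x * y) = x * s c y)"

text \<open>An element of V\<otimes>V (resp. V\<otimes>V\<otimes>V) is represented by a list of pairs
(resp. triples) standing for the sum of the corresponding simple tensors.  Over a
field, two such sums are equal in the tensor product iff every k-bilinear
(resp. trilinear) form takes the same value on them.\<close>

definition bilinear_form :: "('k::field \<Rightarrow> 'v::ab_group_add \<Rightarrow> 'v) \<Rightarrow> ('v \<Rightarrow> 'v \<Rightarrow> 'k) \<Rightarrow> bool" where
  "bilinear_form s \<beta> \<longleftrightarrow>
     (\<forall>x y z. \<beta> (x + y) z = \<beta> x z + \<beta> y z \<and> \<beta> z (x + y) = \<beta> z x + \<beta> z y) \<and>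
     (\<forall>c x y. \<beta> (s c x) y = c * \<beta> x y \<and> \<beta> x (s c y) = c * \<beta> x y)"

definition trilinear_form :: "('k::field \<Rightarrow> 'v::ab_group_add \<Rightarrow> 'v) \<Rightarrow> ('v \<Rightarrow> 'v \<Rightarrow> 'v \<Rightarrow> 'k) \<Rightarrow> bool" where
  "trilinear_form s \<tau> \<longleftrightarrow>
     (\<forall>x y u v. \<tau> (x + y) u v = \<tau> x u v + \<tau> y u v \<and>
                \<tau> u (x + y) v = \<tau> u x v + \<tau> u y v \<and>
                \<tau> u v (x + y) = \<tau> u v x + \<tau> u v y) \<and>
     (\<forall>c x y z. \<tau> (s c x) y z = c * \<tau> x y z \<and> \<tau> x (s c y) z = c * \<tau> x y z \<and>
                \<tau> x y (s c z) = c * \<tau> x y z)"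

definition tensor_eq2 :: "('k::field \<Rightarrow> 'v::ab_group_add \<Rightarrow> 'v) \<Rightarrow> ('v \<times> 'v) list \<Rightarrow> ('v \<times> 'v) list \<Rightarrow> bool" where
  "tensor_eq2 s xs ys \<longleftrightarrow> (\<forall>\<beta>. bilinear_form s \<beta> \<longrightarrow>
      sum_list (map (\<lambda>(a, b). \<beta> a b) xs) = sum_list (map (\<lambda>(a, b). \<beta> a b) ys))"

definition tensor_eq3 :: "('k::field \<Rightarrow> 'v::ab_group_add \<Rightarrow> 'v) \<Rightarrow> ('v \<times> 'v \<times> 'v) list \<Rightarrow> ('v \<times> 'v \<times> 'v) list \<Rightarrow> bool" where
  "tensor_eq3 s xs ys \<longleftrightarrow> (\<forall>\<tau>. trilinear_form s \<tau> \<longrightarrow>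
      sum_list (map (\<lambda>(a, b, c). \<tau> a b c) xs) = sum_list (map (\<lambda>(a, b, c). \<tau> a b c) ys))"

text \<open>The comultiplication \<Delta> h is given by a Sweedler representative
(list of pairs (h1,h2) with \<Delta> h = \<Sum> h1 \<otimes> h2), all axioms being equalities in the
tensor product.\<close>

definition hopf_algebra ::
  "('k::field \<Rightarrow> 'h::ring_1 \<Rightarrow> 'h) \<Rightarrow> ('h \<Rightarrow> ('h \<times> 'h) list) \<Rightarrow> ('h \<Rightarrow> 'k) \<Rightarrow> ('h \<Rightarrow> 'h) \<Rightarrow> bool" where
  "hopf_algebra s \<Delta> \<epsilon> S \<longleftrightarrow>
     k_algebra s \<and>
     \<comment> \<open>\<Delta> and \<epsilon> are k-linear\<close>
     (\<forall>x y. tensor_eq2 s (\<Delta> (x + y)) (\<Delta> x @ \<Delta> y)) \<and>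
     (\<forall>c x. tensor_eq2 s (\<Delta> (s c x)) (map (\<lambda>(a, b). (s c a, b)) (\<Delta> x))) \<and>
     (\<forall>x y. \<epsilon> (x + y) = \<epsilon> x + \<epsilon> y) \<and>
     (\<forall>c x. \<epsilon> (s c x) = c * \<epsilon> x) \<and>
     \<comment> \<open>coassociativity\<close>
     (\<forall>h. tensor_eq3 s
        (concat (map (\<lambda>(a, b). map (\<lambda>(a1, a2). (a1, a2, b)) (\<Delta> a)) (\<Delta> h)))
        (concat (map (\<lambda>(a, b). map (\<lambda>(b1, b2). (a, b1, b2)) (\<Delta> b)) (\<Delta> h)))) \<and>
     \<comment> \<open>counit\<close>
     (\<forall>h. sum_list (map (\<lambda>(a, b). s (\<epsilon> a) b) (\<Delta> h)) = h \<and>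
          sum_list (map (\<lambda>(a, b). s (\<epsilon> b) a) (\<Delta> h)) = h) \<and>
     \<comment> \<open>\<Delta> and \<epsilon> are algebra maps\<close>
     (\<forall>x y. tensor_eq2 s (\<Delta> (x * y))
        (concat (map (\<lambda>(a, b). map (\<lambda>(c, d). (a * c, b * d)) (\<Delta> y)) (\<Delta> x)))) \<and>
     tensor_eq2 s (\<Delta> 1) [(1, 1)] \<and>
     (\<forall>x y. \<epsilon> (x * y) = \<epsilon> x * \<epsilon> y) \<and> \<epsilon> 1 = 1 \<and>
     \<comment> \<open>antipode: k-linear, convolution inverse of the identity\<close>
     (\<forall>x y. S (x + y) = S x + S y) \<and> (\<forall>c x. S (s c x) = s c (S x)) \<and>
     (\<forall>h. sum_list (map (\<lambda>(a, b). S a * b) (\<Delta> h)) = s (\<epsilon> h) 1 \<and>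
          sum_list (map (\<lambda>(a, b). a * S b) (\<Delta> h)) = s (\<epsilon> h) 1)"

definition hopf_algebra_bij_antipode ::
  "('k::field \<Rightarrow> 'h::ring_1 \<Rightarrow> 'h) \<Rightarrow> ('h \<Rightarrow> ('h \<times> 'h) list) \<Rightarrow> ('h \<Rightarrow> 'k) \<Rightarrow> ('h \<Rightarrow> 'h) \<Rightarrow> bool" where
  "hopf_algebra_bij_antipode s \<Delta> \<epsilon> S \<longleftrightarrow> hopf_algebra s \<Delta> \<epsilon> S \<and> bij S"

definition module_algebra ::
  "('k::field \<Rightarrow> 'h::ring_1 \<Rightarrow> 'h) \<Rightarrow> ('h \<Rightarrow> ('h \<times> 'h) list) \<Rightarrow> ('h \<Rightarrow> 'k) \<Rightarrow>
   ('k \<Rightarrow> 'a::ring_1 \<Rightarrow> 'a) \<Rightarrow> ('h \<Rightarrow> 'a \<Rightarrow> 'a) \<Rightarrow> bool" where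
  "module_algebra sH \<Delta> \<epsilon> sA act \<longleftrightarrow>
     k_algebra sA \<and>
     \<comment> \<open>the action H \<otimes> A \<rightarrow> A is k-bilinear\<close>
     (\<forall>x y a. act (x + y) a = act x a + act y a) \<and>
     (\<forall>c x a. act (sH c x) a = sA c (act x a)) \<and>
     (\<forall>h a b. act h (a + b) = act h a + act h b) \<and>
     (\<forall>c h a. act h (sA c a) = sA c (act h a)) \<and>
     \<comment> \<open>left H-module\<close>
     (\<forall>x y a. act (x * y) a = act x (act y a)) \<and> (\<forall>a. act 1 a = a) \<and>
     \<comment> \<open>module algebra conditions\<close>
     (\<forall>h a b. act h (a * b) = sum_list (map (\<lambda>(h1, h2). act h1 a * act h2 b) (\<Delta> h))) \<and>
     (\<forall>h. act h 1 = sA (\<epsilon> h) 1)"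

definition two_sided_ideal :: "'a::ring_1 set \<Rightarrow> bool" where
  "two_sided_ideal I \<longleftrightarrow> 0 \<in> I \<and> (\<forall>x\<in>I. \<forall>y\<in>I. x + y \<in> I) \<and> (\<forall>x\<in>I. - x \<in> I) \<and>
     (\<forall>x\<in>I. \<forall>r. r * x \<in> I \<and> x * r \<in> I)"

definition ideal_prod :: "'a::ring_1 set \<Rightarrow> 'a set \<Rightarrow> 'a set" where
  "ideal_prod I J = {x. \<exists>(n::nat) f g. (\<forall>i<n. f i \<in> I \<and> g i \<in> J) \<and> x = (\<Sum>i<n. f i * g i)}"

definition prime_ideal :: "'a::ring_1 set \<Rightarrow> bool" where
  "prime_ideal P \<longleftrightarrow> two_sided_ideal P \<and> P \<noteq> UNIV \<and>
     (\<forall>I J. two_sided_ideal I \<and> two_sided_ideal J \<and> ideal_prod I J \<subseteq> P \<longrightarrow> I \<subseteq> P \<or> J \<subseteq> P)"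

definition Spec :: "'a::ring_1 set set" where
  "Spec = {P. prime_ideal P}"

definition H_ideal :: "('h \<Rightarrow> 'a::ring_1 \<Rightarrow> 'a) \<Rightarrow> 'a set \<Rightarrow> bool" where
  "H_ideal act I \<longleftrightarrow> two_sided_ideal I \<and> (\<forall>h. \<forall>x\<in>I. act h x \<in> I)"

text \<open>I is H-prime iff A/I \<noteq> 0 and the product of two nonzero H-ideals of A/I is
nonzero; H-ideals of A/I correspond to H-ideals J of A containing I, J/I being zero
iff J = I, and (J/I)(K/I) = (JK+I)/I.\<close>
definition H_prime :: "('h \<Rightarrow> 'a::ring_1 \<Rightarrow> 'a) \<Rightarrow> 'a set \<Rightarrow> bool" where
  "H_prime act I \<longleftrightarrow> H_ideal act I \<and> I \<noteq> UNIV \<and>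
     (\<forall>J K. H_ideal act J \<and> H_ideal act K \<and> I \<subseteq> J \<and> I \<subseteq> K \<and> ideal_prod J K \<subseteq> I
            \<longrightarrow> J = I \<or> K = I)"

definition H_Spec :: "('h \<Rightarrow> 'a::ring_1 \<Rightarrow> 'a) \<Rightarrow> 'a set set" where
  "H_Spec act = {I. H_prime act I}"

definition colon_H :: "('h \<Rightarrow> 'a \<Rightarrow> 'a) \<Rightarrow> 'a set \<Rightarrow> 'a set" where
  "colon_H act P = {a. \<forall>h. act h a \<in> P}"

definition V_on :: "'a set set \<Rightarrow> 'a set \<Rightarrow> 'a set set" where
  "V_on X S = {Q \<in> X. S \<subseteq> Q}"

definition zariski_topology :: "'a set set \<Rightarrow> 'a set topology" where
  "zariski_topology X = topology_generated_by (insert X {X - V_on X S | S. True})"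

abbreviation spec_top :: "'a::ring_1 set topology" where
  "spec_top \<equiv> zariski_topology Spec"

abbreviation hspec_top :: "('h \<Rightarrow> 'a::ring_1 \<Rightarrow> 'a) \<Rightarrow> 'a set topology" where
  "hspec_top act \<equiv> zariski_topology (H_Spec act)"

end

theory Submission
  imports Defs
begin

text \<open>P : H is the largest H-ideal inside P.  So if a product of H-ideals containing P : H
lies in P : H, it lies in P, primality puts one factor into P and hence into P : H; thus
P \<mapsto> P : H maps Spec A to H-Spec A.  It pulls the basic open set {Q. \<not> S \<subseteq> Q} back to the
basic open set {P. \<not> H.S \<subseteq> P}, hence is continuous.  For primes V(S) \<union> V(T) = V(\<langle>S\<rangle>\<langle>T\<rangle>),
so every open subset of Spec A is basic.  If the preimage of U \<subseteq> H-Spec A is Spec A - V(T)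
and every H-prime I is the intersection of its fibre, then the fibre over I lies in V(T)
exactly when \<Inter>V(T) \<subseteq> I, so U = H-Spec A - V(\<Inter>V(T)) is open: the map is a quotient map.\<close>

lemma topspace_zariski_topology [simp]: "topspace (zariski_topology X) = X"
  unfolding zariski_topology_def topology_generated_by_topspace by (auto simp: V_on_def)

lemma openin_zariski_topology_basic: "openin (zariski_topology X) (X - V_on X S)"
  unfolding zariski_topology_def by (rule topology_generated_by_Basis) blast

lemma continuous_map_into_zariski_topology:
  assumes "\<And>x. x \<in> topspace T \<Longrightarrow> f x \<in> X"
    and "\<And>S. openin T {x \<in> topspace T. \<not> S \<subseteq> f x}"
  shows "continuous_map T (zariski_topology X) f"
  unfolding zariski_topology_def
proof (rule continuous_on_generated_topo)
  fix U assume "U \<in> insert X {X - V_on X S |S. True}"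
  then consider "U = X" | S where "U = X - V_on X S" by blast
  then show "openin T (f -` U \<inter> topspace T)"
  proof cases
    case 1
    then have "f -` U \<inter> topspace T = topspace T" using assms(1) by auto
    then show ?thesis by simp
  next
    case 2
    then have "f -` U \<inter> topspace T = {x \<in> topspace T. \<not> S \<subseteq> f x}"
      using assms(1) by (auto simp: V_on_def)
    then show ?thesis using assms(2) by simp
  qed
qed (use assms(1) in auto)

lemma zariski_topology_subtopology:
  assumes "Y \<subseteq> X"
  shows "zariski_topology Y = subtopology (zariski_topology X) Y"
proof -
  have "{Q \<in> Y. \<not> S \<subseteq> Q} = Y - V_on Y S" for S
    by (auto simp: V_on_def)
  then have to_sub: "continuous_map (zariski_topology Y) (subtopology (zariski_topology X) Y) id"
    using assms
    by (auto intro!: continuous_map_into_subtopology continuous_map_into_zariski_topology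
        simp: openin_zariski_topology_basic)
  have "{Q \<in> topspace (subtopology (zariski_topology X) Y). \<not> S \<subseteq> Q} = Y \<inter> (X - V_on X S)"
    for S using assms by (auto simp: V_on_def)
  then have from_sub: "continuous_map (subtopology (zariski_topology X) Y) (zariski_topology Y) id"
    using assms
    by (auto intro!: continuous_map_into_zariski_topology openin_subtopology_Int2
        simp: openin_zariski_topology_basic)
  have "homeomorphic_map (zariski_topology Y) (subtopology (zariski_topology X) Y) id"
    unfolding homeomorphic_map_maps homeomorphic_maps_def using to_sub from_sub by auto
  then show ?thesis by simp
qed

lemma openin_zariski_topology_iff:
  assumes proper: "UNIV \<notin> X" and Un: "\<And>S T. \<exists>R. V_on X S \<union> V_on X T = V_on X R"
  shows "openin (zariski_topology X) U \<longleftrightarrow> (\<exists>T. U = X - V_on X T)"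
proof
  assume "openin (zariski_topology X) U"
  then have "generate_topology_on (insert X {X - V_on X S |S. True}) U"
    unfolding zariski_topology_def by (rule openin_topology_generated_by)
  then show "\<exists>T. U = X - V_on X T"
  proof induction
    case Empty
    have "{} = X - V_on X {}" by (auto simp: V_on_def)
    then show ?case by blast
  next
    case (Int a b)
    then obtain S T where "a = X - V_on X S" "b = X - V_on X T" by blast
    moreover obtain R where "V_on X S \<union> V_on X T = V_on X R" using Un by blast
    ultimately have "a \<inter> b = X - V_on X R" by blast
    then show ?case by blast
  next
    case (UN K)
    then obtain F where F: "\<And>k. k \<in> K \<Longrightarrow> k = X - V_on X (F k)" by metis
    have "\<Union>K = (\<Union>k\<in>K. X - V_on X (F k))"
      using F by (metis (no_types, lifting) SUP_cong image_ident)
    also have "\<dots> = X - V_on X (\<Union>k\<in>K. F k)"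
      by (auto simp: V_on_def)
    finally show ?case by blast
  next
    case (Basis s)
    have "X = X - V_on X UNIV" using proper by (auto simp: V_on_def top.extremum_unique)
    with Basis show ?case by blast
  qed
qed (auto simp: openin_zariski_topology_basic)

lemma quotient_map_zariski_topology:
  assumes basic: "\<And>U. openin (zariski_topology X) U \<Longrightarrow> \<exists>T. U = X - V_on X T"
    and cont: "continuous_map (zariski_topology X) (zariski_topology Y) f"
    and surj: "f ` X = Y"
    and below: "\<And>P. P \<in> X \<Longrightarrow> f P \<subseteq> P"
    and fibres: "\<And>I. I \<in> Y \<Longrightarrow> \<Inter>{P \<in> X. f P = I} = I"
  shows "quotient_map (zariski_topology X) (zariski_topology Y) f"
proof -
  have "openin (zariski_topology Y) U"
    if U: "U \<subseteq> Y" and "openin (zariski_topology X) {P \<in> X. f P \<in> U}" for U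
  proof -
    obtain T where T: "{P \<in> X. f P \<in> U} = X - V_on X T"
      using basic \<open>openin (zariski_topology X) {P \<in> X. f P \<in> U}\<close> by blast
    have "U = Y - V_on Y (\<Inter>(V_on X T))"
    proof (intro equalityI subsetI)
      fix I assume "I \<in> U"
      then obtain P where P: "P \<in> X" "f P = I" using U surj by blast
      with \<open>I \<in> U\<close> T have "\<not> \<Inter>(V_on X T) \<subseteq> P"
        by (auto simp: V_on_def)
      moreover have "I \<subseteq> P" using below P by blast
      ultimately show "I \<in> Y - V_on Y (\<Inter>(V_on X T))"
        using \<open>I \<in> U\<close> U unfolding V_on_def by blast
    next
      fix I assume I: "I \<in> Y - V_on Y (\<Inter>(V_on X T))"
      show "I \<in> U"
      proof (rule ccontr)
        assume "I \<notin> U"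
        then have "{P \<in> X. f P = I} \<subseteq> V_on X T" using T by blast
        then have "\<Inter>(V_on X T) \<subseteq> I" using fibres I by blast
        then show False using I by (simp add: V_on_def)
      qed
    qed
    then show ?thesis by (simp add: openin_zariski_topology_basic)
  qed
  moreover have "openin (zariski_topology X) {P \<in> X. f P \<in> U}"
    if "openin (zariski_topology Y) U" for U
    using cont that by (simp add: continuous_map_def)
  ultimately show ?thesis unfolding quotient_map_def using surj by auto
qed

lemma sum_list_in_ideal:
  "two_sided_ideal P \<Longrightarrow> (\<And>x. x \<in> set xs \<Longrightarrow> x \<in> P) \<Longrightarrow> sum_list xs \<in> P"
  by (induction xs) (auto simp: two_sided_ideal_def)

lemma sum_in_ideal:
  "two_sided_ideal P \<Longrightarrow> (\<And>i. i \<in> A \<Longrightarrow> f i \<in> P) \<Longrightarrow> sum f A \<in> P"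
  by (induction A rule: infinite_finite_induct) (auto simp: two_sided_ideal_def)

lemma ideal_prod_subset:
  assumes P: "two_sided_ideal P" and "I \<subseteq> P \<or> J \<subseteq> P"
  shows "ideal_prod I J \<subseteq> P"
proof
  fix x assume "x \<in> ideal_prod I J"
  then obtain n :: nat and f g where fg: "\<forall>i<n. f i \<in> I \<and> g i \<in> J" "x = (\<Sum>i<n. f i * g i)"
    unfolding ideal_prod_def by blast
  have "f i * g i \<in> P" if "i < n" for i
    using fg(1) that assms unfolding two_sided_ideal_def by blast
  then show "x \<in> P" unfolding fg(2) by (auto intro: sum_in_ideal[OF P])
qed

definition ideal_generated :: "'a::ring_1 set \<Rightarrow> 'a set" where
  "ideal_generated T = \<Inter>{I. two_sided_ideal I \<and> T \<subseteq> I}"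

lemma two_sided_ideal_ideal_generated: "two_sided_ideal (ideal_generated T)"
  by (auto simp: ideal_generated_def two_sided_ideal_def)

lemma ideal_generated_subset_iff:
  "two_sided_ideal P \<Longrightarrow> ideal_generated T \<subseteq> P \<longleftrightarrow> T \<subseteq> P"
  by (auto simp: ideal_generated_def)

lemma prime_ideal_prod_generated_subset_iff:
  assumes "prime_ideal P"
  shows "ideal_prod (ideal_generated S) (ideal_generated T) \<subseteq> P \<longleftrightarrow> S \<subseteq> P \<or> T \<subseteq> P"
  using assms two_sided_ideal_ideal_generated ideal_generated_subset_iff ideal_prod_subset
  unfolding prime_ideal_def by metis

lemma V_on_Spec_Un:
  "V_on Spec S \<union> V_on Spec T = V_on Spec (ideal_prod (ideal_generated S) (ideal_generated T))"
  unfolding V_on_def Spec_def using prime_ideal_prod_generated_subset_iff by blast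

lemma openin_spec_top_iff: "openin spec_top U \<longleftrightarrow> (\<exists>T. U = Spec - V_on Spec T)"
proof (rule openin_zariski_topology_iff)
  show "UNIV \<notin> Spec" by (simp add: Spec_def prime_ideal_def)
qed (use V_on_Spec_Un in blast)

context
  fixes sH :: "'k::field \<Rightarrow> 'h::ring_1 \<Rightarrow> 'h" and \<Delta> :: "'h \<Rightarrow> ('h \<times> 'h) list"
    and \<epsilon> :: "'h \<Rightarrow> 'k" and sA :: "'k \<Rightarrow> 'a::ring_1 \<Rightarrow> 'a" and act :: "'h \<Rightarrow> 'a \<Rightarrow> 'a"
  assumes A: "module_algebra sH \<Delta> \<epsilon> sA act"
begin

lemma additive_act: "Modules.additive (act h)"
  using A by unfold_locales (simp add: module_algebra_def)

lemma colon_H_subset: "colon_H act P \<subseteq> P"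
  using A by (auto simp: module_algebra_def colon_H_def dest: spec[of _ 1])

lemma H_ideal_colon_H:
  assumes P: "two_sided_ideal P"
  shows "H_ideal act (colon_H act P)"
proof -
  have act_mult: "act h (a * b) = (\<Sum>(h1, h2)\<leftarrow>\<Delta> h. act h1 a * act h2 b)"
    and act_act: "act (g * h) a = act g (act h a)" for g h a b
    using A by (simp_all add: module_algebra_def)
  have "act h (r * x) \<in> P \<and> act h (x * r) \<in> P" if "x \<in> colon_H act P" for h x r
  proof -
    have "act h' x \<in> P" for h' using that by (simp add: colon_H_def)
    with P show ?thesis
      unfolding act_mult two_sided_ideal_def by (auto intro!: sum_list_in_ideal[OF P])
  qed
  then have "r * x \<in> colon_H act P \<and> x * r \<in> colon_H act P" if "x \<in> colon_H act P" for x r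
    using that by (simp add: colon_H_def)
  moreover have "x + y \<in> colon_H act P" if "x \<in> colon_H act P" "y \<in> colon_H act P" for x y
    using that P Modules.additive.add[OF additive_act] by (simp add: colon_H_def two_sided_ideal_def)
  moreover have "0 \<in> colon_H act P"
    using P Modules.additive.zero[OF additive_act] by (simp add: colon_H_def two_sided_ideal_def)
  moreover have "- x \<in> colon_H act P" if "x \<in> colon_H act P" for x
    using that P Modules.additive.minus[OF additive_act]
    by (simp add: colon_H_def two_sided_ideal_def)
  moreover have "act h x \<in> colon_H act P" if "x \<in> colon_H act P" for h x
    using that by (simp add: colon_H_def flip: act_act)
  ultimately show ?thesis unfolding H_ideal_def two_sided_ideal_def by blast
qed

lemma H_ideal_subset_colon_H: "H_ideal act J \<Longrightarrow> J \<subseteq> P \<Longrightarrow> J \<subseteq> colon_H act P"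
  by (auto simp: H_ideal_def colon_H_def)

lemma H_prime_colon_H:
  assumes P: "prime_ideal P"
  shows "H_prime act (colon_H act P)"
proof -
  have ideal: "two_sided_ideal P" and "P \<noteq> UNIV"
    using P by (simp_all add: prime_ideal_def)
  have "1 \<notin> P"
  proof
    assume "1 \<in> P"
    then have "r \<in> P" for r using ideal unfolding two_sided_ideal_def by (metis mult_1_right)
    then show False using \<open>P \<noteq> UNIV\<close> by auto
  qed
  then have proper: "colon_H act P \<noteq> UNIV" using colon_H_subset by blast
  have "J = colon_H act P \<or> K = colon_H act P"
    if "H_ideal act J" "H_ideal act K" "colon_H act P \<subseteq> J" "colon_H act P \<subseteq> K"
       "ideal_prod J K \<subseteq> colon_H act P" for J K
  proof -
    have "two_sided_ideal J" "two_sided_ideal K" using that(1,2) by (simp_all add: H_ideal_def)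
    moreover have "ideal_prod J K \<subseteq> P" using that(5) colon_H_subset by blast
    ultimately have "J \<subseteq> P \<or> K \<subseteq> P" using P unfolding prime_ideal_def by blast
    then show ?thesis using that(1-4) H_ideal_subset_colon_H by blast
  qed
  then show ?thesis unfolding H_prime_def using H_ideal_colon_H[OF ideal] proper by blast
qed

lemma continuous_map_colon_H: "continuous_map spec_top (hspec_top act) (colon_H act)"
proof (rule continuous_map_into_zariski_topology)
  show "colon_H act P \<in> H_Spec act" if "P \<in> topspace spec_top" for P
    using that H_prime_colon_H by (simp add: Spec_def H_Spec_def)
  have "{P \<in> Spec. \<not> S \<subseteq> colon_H act P} = Spec - V_on Spec {act h s | h s. s \<in> S}" for S
    by (auto simp: V_on_def colon_H_def)
  then show "openin spec_top {P \<in> topspace spec_top. \<not> S \<subseteq> colon_H act P}" for S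
    by (simp add: openin_zariski_topology_basic)
qed

end

theorem lemma4p1:
  fixes sH :: "'k::field \<Rightarrow> 'h::ring_1 \<Rightarrow> 'h"
    and \<Delta> :: "'h \<Rightarrow> ('h \<times> 'h) list" and \<epsilon> :: "'h \<Rightarrow> 'k" and S :: "'h \<Rightarrow> 'h"
    and sA :: "'k \<Rightarrow> 'a::ring_1 \<Rightarrow> 'a" and act :: "'h \<Rightarrow> 'a \<Rightarrow> 'a"
  assumes H: "hopf_algebra_bij_antipode sH \<Delta> \<epsilon> S"
    and A: "module_algebra sH \<Delta> \<epsilon> sA act"
  shows "continuous_map spec_top (hspec_top act) (colon_H act) \<and>
         (H_Spec act \<subseteq> Spec \<longrightarrow> hspec_top act = subtopology spec_top (H_Spec act)) \<and>
         ((colon_H act ` Spec = H_Spec act \<and>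
           (\<forall>I \<in> H_Spec act. \<Inter> {P \<in> Spec. colon_H act P = I} = I))
          \<longrightarrow> quotient_map spec_top (hspec_top act) (colon_H act))"
proof -
  have cont: "continuous_map spec_top (hspec_top act) (colon_H act)"
    by (rule continuous_map_colon_H[OF A])
  moreover have "hspec_top act = subtopology spec_top (H_Spec act)" if "H_Spec act \<subseteq> Spec"
    using that by (rule zariski_topology_subtopology)
  moreover have "quotient_map spec_top (hspec_top act) (colon_H act)"
    if "colon_H act ` Spec = H_Spec act" "\<forall>I \<in> H_Spec act. \<Inter> {P \<in> Spec. colon_H act P = I} = I"
    using openin_spec_top_iff cont that colon_H_subset[OF A]
    by (intro quotient_map_zariski_topology) auto
  ultimately show ?thesis by blast
qed

end
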